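(* Consider the caching network and the backhaul-eavesdropper scenario $S_1$ described in the context, with a placement $\mathbf{m}=(m_1,\dots,m_N)$ of integers $0\le m_j\le n$. For each $j$ let $I_j \triangleq \min\left(S, \lfloor n/m_j\rfloor\right)$ (with $I_j=S$ when $m_j=0$), and assume $\sum_{d=1}^{I_j} d\gamma_d>0$. Then the network is secure in scenario $S_1$ if and only if, for every $j=1,\dots,N$, $$ m_j > \frac{n}{Q p_j}\cdot \frac{Q p_j \sum_{d=1}^{I_j}\gamma_d - 1}{\sum_{d=1}^{I_j} d\,\gamma_d}. $$
   Context: A macro base station (MBS) has access to a library of $N$ files $F_1,\dots,F_N$; file $F_j$ is requested with probability $p_j>0$, $\sum_j p_j=1$. There are $N_{\text{SBS}}$ small-cell base stations (SBSs), each with a cache. Each file is split into $n$ fragments and encoded with a code such that any $n$ distinct encoded packets of a file suffice to recover it, while fewer than $n$ distinct packets do not allow recovery of the file. A placement $\mathbf{m}=(m_1,\dots,m_N)$ means each SBS stores $m_j$ encoded packets of $F_j$, with packets stored at different SBSs all distinct. A user is served by exactly $d$ SBSs with probability $\gamma_d$, $d=1,\dots,S$, where $\gamma_d\ge 0$, $\sum_{d=1}^S\gamma_d=1$, and $S\le N_{\text{SBS}}$ is the maximum number of SBSs serving a user. A user requesting $F_j$ and served by $d$ SBSs receives $d m_j$ distinct packets from them, and the MBS sends the missing $n\left(1-\min(1, d m_j/n)\right)$ new (distinct) packets over the backhaul. Scenario $S_1$: each SBS receives $Q$ requests during the delivery phase, of which $Q p_j$ are for file $F_j$; an eavesdropper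 intercepts all packets sent by the MBS over one MBS-to-SBS link, so the number of (all distinct) packets of $F_j$ it collects is $P_j=\sum_{d=1}^{S} Q\gamma_d p_j\, n\left(1-\min(1,d m_j/n)\right)$. The network is secure in scenario $S_1$ if the eavesdropper cannot recover any file, i.e., $P_j<n$ for all $j=1,\dots,N$. *)

theory Defs
  imports Complex_Main
begin

definition eaves_packets ::
  "nat \<Rightarrow> nat \<Rightarrow> nat \<Rightarrow> (nat \<Rightarrow> real) \<Rightarrow> (nat \<Rightarrow> real) \<Rightarrow> (nat \<Rightarrow> nat) \<Rightarrow> nat \<Rightarrow> real" where
  "eaves_packets n S Q \<gamma> p m j =
     (\<Sum>d=1..S. real Q * \<gamma> d * p j * real n * (1 - min 1 (real d * real (m j) / real n)))"

text \<open>Secure in scenario S1: the eavesdropper cannot recover any file, P_j < n for all j.\<close>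
definition secure_S1 ::
  "nat \<Rightarrow> nat \<Rightarrow> nat \<Rightarrow> nat \<Rightarrow> (nat \<Rightarrow> real) \<Rightarrow> (nat \<Rightarrow> real) \<Rightarrow> (nat \<Rightarrow> nat) \<Rightarrow> bool" where
  "secure_S1 N n S Q \<gamma> p m \<longleftrightarrow> (\<forall>j\<in>{1..N}. eaves_packets n S Q \<gamma> p m j < real n)"

definition I_idx :: "nat \<Rightarrow> nat \<Rightarrow> (nat \<Rightarrow> nat) \<Rightarrow> nat \<Rightarrow> nat" where
  "I_idx n S m j = (if m j = 0 then S else min S (n div m j))"

end

theory Submission
  imports Defs
begin

text \<open>For SBS counts d up to I_j the d m_j cached packets do not exceed n, so the MBS still has
  to send n - d m_j packets; beyond I_j the cache alone suffices and the MBS sends nothing.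
  Hence P_j is affine in m_j, namely Q p_j (n \<Sum>_{d\<le>I_j} \<gamma>_d - m_j \<Sum>_{d\<le>I_j} d \<gamma>_d),
  and the condition P_j < n can be solved for m_j since the slope is negative.\<close>

lemma le_I_idx_iff:
  assumes "d \<le> S"
  shows "d \<le> I_idx n S m j \<longleftrightarrow> d * m j \<le> n"
  using assms by (auto simp: I_idx_def less_eq_div_iff_mult_less_eq)

lemma eaves_packets_closed_form:
  assumes "n > 0"
  shows "eaves_packets n S Q \<gamma> p m j =
    real Q * p j * (real n * (\<Sum>d=1..I_idx n S m j. \<gamma> d)
                    - real (m j) * (\<Sum>d=1..I_idx n S m j. real d * \<gamma> d))"
proof -
  let ?I = "I_idx n S m j"
  let ?f = "\<lambda>d. real Q * \<gamma> d * p j * real n * (1 - min 1 (real d * real (m j) / real n))"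
  have "?I \<le> S" by (simp add: I_idx_def)
  then have split: "{1..S} = {1..?I} \<union> {?I+1..S}" by auto
  have served: "?f d = real Q * p j * (real n * \<gamma> d - real (m j) * (real d * \<gamma> d))"
    if "d \<in> {1..?I}" for d
  proof -
    have "d * m j \<le> n" using that le_I_idx_iff[of d S n m j] \<open>?I \<le> S\<close> by auto
    then have "real d * real (m j) / real n \<le> 1"
      using assms by (simp add: field_simps flip: of_nat_mult)
    then show ?thesis using assms by (simp add: field_simps)
  qed
  have saturated: "?f d = 0" if "d \<in> {?I+1..S}" for d
  proof -
    have "n < d * m j" using that le_I_idx_iff[of d S n m j] by auto
    then have "1 \<le> real d * real (m j) / real n"
      using assms by (simp add: field_simps flip: of_nat_mult)
    then show ?thesis by simp
  qed
  have "eaves_packets n S Q \<gamma> p m j = sum ?f {1..?I} + sum ?f {?I+1..S}"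
    unfolding eaves_packets_def split by (rule sum.union_disjoint) auto
  also have "sum ?f {?I+1..S} = 0"
    using saturated by (intro sum.neutral) blast
  also have "sum ?f {1..?I} =
      (\<Sum>d=1..?I. real Q * p j * (real n * \<gamma> d - real (m j) * (real d * \<gamma> d)))"
    using served by (rule sum.cong[OF refl])
  finally show ?thesis
    by (simp add: sum_subtractf flip: sum_distrib_left)
qed

lemma affine_less_iff_threshold:
  fixes c D G x y :: real
  assumes "c > 0" and "D > 0"
  shows "c * (y * G - x * D) < y \<longleftrightarrow> x > y / c * ((c * G - 1) / D)"
  using assms by (simp add: field_simps)

theorem proposition3:
  fixes N N_SBS S n Q :: nat
    and p \<gamma> :: "nat \<Rightarrow> real"
    and m :: "nat \<Rightarrow> nat"
  assumes n_pos: "n > 0"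
    and Q_pos: "Q > 0"
    and S_pos: "1 \<le> S" and S_le: "S \<le> N_SBS"
    and p_pos: "\<forall>j\<in>{1..N}. p j > 0"
    and p_sum: "(\<Sum>j=1..N. p j) = 1"
    and gamma_nonneg: "\<forall>d\<in>{1..S}. \<gamma> d \<ge> 0"
    and gamma_sum: "(\<Sum>d=1..S. \<gamma> d) = 1"
    and m_le: "\<forall>j\<in>{1..N}. m j \<le> n"
    and denom_pos: "\<forall>j\<in>{1..N}. (\<Sum>d=1..I_idx n S m j. real d * \<gamma> d) > 0"
  shows "secure_S1 N n S Q \<gamma> p m \<longleftrightarrow>
    (\<forall>j\<in>{1..N}. real (m j) >
       real n / (real Q * p j) *
       ((real Q * p j * (\<Sum>d=1..I_idx n S m j. \<gamma> d) - 1)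
        / (\<Sum>d=1..I_idx n S m j. real d * \<gamma> d)))"
  unfolding secure_S1_def eaves_packets_closed_form[OF n_pos]
proof (intro ball_cong refl)
  fix j assume "j \<in> {1..N}"
  then have "real Q * p j > 0" and "(\<Sum>d=1..I_idx n S m j. real d * \<gamma> d) > 0"
    using Q_pos p_pos denom_pos by auto
  then show "(real Q * p j * (real n * (\<Sum>d=1..I_idx n S m j. \<gamma> d)
                - real (m j) * (\<Sum>d=1..I_idx n S m j. real d * \<gamma> d)) < real n) =
    (real (m j) > real n / (real Q * p j) *
       ((real Q * p j * (\<Sum>d=1..I_idx n S m j. \<gamma> d) - 1)
        / (\<Sum>d=1..I_idx n S m j. real d * \<gamma> d)))"
    by (rule affine_less_iff_threshold)
qed

end
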